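(* Let $F_2$ be the free non-Abelian group on two generators $x,y$, and equip $\mathbb{Z}/2\wr F_2$ with the word metric with respect to $\{u,x,y\}$, $u$ the nontrivial element of $\mathbb{Z}/2$. For every $n\ge1$ the $n$-dimensional control function of $\mathbb{Z}/2\wr F_2$ is weakly equivalent to $t\mapsto 2^t$; that is, there is an $n$-dimensional control function of $\mathbb{Z}/2\wr F_2$ weakly dominated by $2^t$, and every $n$-dimensional control function of $\mathbb{Z}/2\wr F_2$ weakly dominates $2^t$.
   Context: Wreath product: $H\wr G$ is the set of pairs $(f,g)$, $f:G\to H$ finitely supported, with $(f_1,g_1)(f_2,g_2)=(f_1\cdot(g_1f_2),g_1g_2)$ where $(gf)(\gamma)=f(g^{-1}\gamma)$; $g\in G$ identified with $(1,g)$ and $a\in H$ with $(f_a,1)$, $f_a(1)=a$, $f_a(\gamma)=1$ otherwise. For a metric space $X$, $r>0$: $r$-components of $Y\subseteq X$ are classes of points joined by sequences in $Y$ with consecutive distances $<r$. An $m$-dimensional control function of $X$ is $D:\mathbb{R}_+\to\mathbb{R}_+\cup\{\infty\}$ such that for each $r>0$ there is a cover $\{X_0,\dots,X_m\}$ of $X$ such that every open ball $B(x,r)$ lies in some $X_i$ and every $r$-component of each $X_i$ has diameter at most $D(r)$. $f$ weakly dominates $g$ if there are $\lambda\ge1$, $C\ge0$ with $g(t)\le\lambda f(\lambda t+C)+C$ for all $t\ge0$; weakly equivalent means each weakly dominates the other. *)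

theory Defs
  imports "HOL-Analysis.Analysis" "HOL-Library.Extended_Nonnegative_Real"
begin

datatype gen = GX | GY

text \<open>A letter is a generator together with a flag: True means the inverse letter.\<close>
type_synonym letter = "gen \<times> bool"

definition linv :: "letter \<Rightarrow> letter" where
  "linv l = (fst l, \<not> snd l)"

fun red_cons :: "letter \<Rightarrow> letter list \<Rightarrow> letter list" where
  "red_cons a [] = [a]"
| "red_cons a (b # w) = (if b = linv a then w else a # b # w)"

definition reduce :: "letter list \<Rightarrow> letter list" where
  "reduce w = foldr red_cons w []"

fun reduced :: "letter list \<Rightarrow> bool" where
  "reduced [] = True"
| "reduced [a] = True"
| "reduced (a # b # w) = (b \<noteq> linv a \<and> reduced (b # w))"

definition F2 :: "letter list set" where
  "F2 = {w. reduced w}"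

definition fmult :: "letter list \<Rightarrow> letter list \<Rightarrow> letter list" where
  "fmult v w = reduce (v @ w)"

definition finv :: "letter list \<Rightarrow> letter list" where
  "finv w = rev (map linv w)"

text \<open>A finitely supported function F_2 \<Rightarrow> Z/2 is represented by its (finite) support;
  pointwise addition in Z/2 is symmetric difference, and (g f)(\<gamma>) = f(g^{-1}\<gamma>)
  corresponds to translating the support by g.\<close>
type_synonym lelem = "letter list set \<times> letter list"

definition lamp_carrier :: "lelem set" where
  "lamp_carrier = {(A, g). finite A \<and> A \<subseteq> F2 \<and> g \<in> F2}"

definition lmult :: "lelem \<Rightarrow> lelem \<Rightarrow> lelem" where
  "lmult a b = (let A1 = fst a; g1 = snd a; B = fmult g1 ` fst b
                in ((A1 - B) \<union> (B - A1), fmult g1 (snd b)))"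

definition lone :: lelem where
  "lone = ({}, [])"

definition linvw :: "lelem \<Rightarrow> lelem" where
  "linvw a = (fmult (finv (snd a)) ` fst a, finv (snd a))"

definition gen_u :: lelem where "gen_u = ({[]}, [])"
definition gen_x :: lelem where "gen_x = ({}, [(GX, False)])"
definition gen_y :: lelem where "gen_y = ({}, [(GY, False)])"

definition lgens :: "lelem set" where
  "lgens = {gen_u, gen_x, gen_y}"

definition symgens :: "lelem set" where
  "symgens = lgens \<union> linvw ` lgens"

definition lprod :: "lelem list \<Rightarrow> lelem" where
  "lprod ws = foldr lmult ws lone"

definition wordlen :: "lelem \<Rightarrow> nat" where
  "wordlen a = (LEAST n. \<exists>ws. length ws = n \<and> set ws \<subseteq> symgens \<and> lprod ws = a)"

definition ldist :: "lelem \<Rightarrow> lelem \<Rightarrow> real" where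
  "ldist a b = real (wordlen (lmult (linvw a) b))"

inductive rconn :: "'a set \<Rightarrow> ('a \<Rightarrow> 'a \<Rightarrow> real) \<Rightarrow> real \<Rightarrow> 'a \<Rightarrow> 'a \<Rightarrow> bool"
  for Y d r where
  refl: "p \<in> Y \<Longrightarrow> rconn Y d r p p"
| step: "rconn Y d r p q \<Longrightarrow> q' \<in> Y \<Longrightarrow> d q q' < r \<Longrightarrow> rconn Y d r p q'"

text \<open>D is an m-dimensional control function of the metric space (X, d).
  Diameter of an r-component at most D r is expressed pointwise.\<close>
definition control_fn :: "'a set \<Rightarrow> ('a \<Rightarrow> 'a \<Rightarrow> real) \<Rightarrow> nat \<Rightarrow> (real \<Rightarrow> ennreal) \<Rightarrow> bool" where
  "control_fn X d m D \<longleftrightarrow>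
     (\<forall>r>0. \<exists>U :: nat \<Rightarrow> 'a set.
        (\<forall>i\<le>m. U i \<subseteq> X) \<and> (\<Union>i\<le>m. U i) = X \<and>
        (\<forall>x\<in>X. \<exists>i\<le>m. {y\<in>X. d x y < r} \<subseteq> U i) \<and>
        (\<forall>i\<le>m. \<forall>p q. rconn (U i) d r p q \<longrightarrow> ennreal (d p q) \<le> D r))"

definition weakly_dominates :: "(real \<Rightarrow> ennreal) \<Rightarrow> (real \<Rightarrow> ennreal) \<Rightarrow> bool" where
  "weakly_dominates f g \<longleftrightarrow>
     (\<exists>L\<ge>1. \<exists>C\<ge>0. \<forall>t\<ge>0. g t \<le> ennreal L * f (L * t + C) + ennreal C)"

end

theory Submission
  imports Defs
begin

text \<open>
  Lower bound: the lamp configurations supported on the \<open>2^R\<close> positive words of length \<open>R\<close>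
  form a Hamming cube in which toggling one lamp costs at most \<open>2 R + 1\<close>. Given a cover by
  \<open>n + 1\<close> sets at a scale \<open>r > 2 R + 1\<close>, every vertex of the cube lies, together with all its
  neighbours, in one member of the cover, and the \<open>r\<close>-components have Hamming diameter at most
  \<open>D r\<close>. Double counting the pairs (vertex, lamp outside its difference with a base point of its
  component) gives \<open>2^R \<le> (n + 2) D r\<close>.

  Upper bound: two sets suffice. Cut the group by the length of the cursor into bands of width
  \<open>5 m\<close> separated by gaps of width \<open>m\<close>, together with a copy shifted by half a period; every
  ball of radius \<open>m\<close> lies in a band of one of the two families. Along an \<open>m\<close>-chain inside a
  band the cursor keeps all but its last \<open>6 m\<close> letters, so only the at most \<open>4^(7 m + 1)\<close> lamps
  within distance \<open>7 m\<close> of that common prefix can change, which bounds the diameter of a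
  component by \<open>2^(O(m))\<close>.
\<close>

section \<open>The free group\<close>

lemma linv_linv [simp]: "linv (linv a) = a"
  by (simp add: linv_def)

lemma reduced_ConsD: "reduced (a # w) \<Longrightarrow> reduced w"
  by (cases w) auto

lemma reduced_red_cons: "reduced w \<Longrightarrow> reduced (red_cons a w)"
  by (cases w) (auto dest: reduced_ConsD)

lemma reduce_Nil [simp]: "reduce [] = []"
  by (simp add: reduce_def)

lemma reduce_Cons: "reduce (a # w) = red_cons a (reduce w)"
  by (simp add: reduce_def)

lemma reduce_append: "reduce (u @ v) = foldr red_cons u (reduce v)"
  by (simp add: reduce_def)

lemma reduced_reduce [simp]: "reduced (reduce w)"
  by (induction w) (auto simp: reduce_Cons reduced_red_cons)

lemma reduce_reduced: "reduced w \<Longrightarrow> reduce w = w"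
proof (induction w)
  case (Cons a w)
  then have "reduce w = w"
    using reduced_ConsD by blast
  with Cons.prems show ?case
    by (cases w) (auto simp: reduce_Cons)
qed simp

lemma reduce_append_reduce [simp]: "reduce (u @ reduce v) = reduce (u @ v)"
  by (simp add: reduce_append reduce_reduced)

lemma reduce_Cons_reduce [simp]: "reduce (a # reduce v) = reduce (a # v)"
  by (simp add: reduce_Cons reduce_reduced)

lemma length_reduce_le: "length (reduce w) \<le> length w"
proof (induction w)
  case (Cons a w)
  have "length (red_cons a (reduce w)) \<le> Suc (length (reduce w))"
    by (cases "reduce w") auto
  with Cons.IH show ?case
    by (simp add: reduce_Cons)
qed simp

lemma red_cons_linv_cancel: "reduced z \<Longrightarrow> red_cons a (red_cons (linv a) z) = z"
  by (cases z rule: reduced.cases) (auto simp: linv_def)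

lemma finv_Nil [simp]: "finv [] = []"
  and finv_Cons [simp]: "finv (a # w) = finv w @ [linv a]"
  and finv_append [simp]: "finv (u @ v) = finv v @ finv u"
  and finv_finv [simp]: "finv (finv w) = w"
  and length_finv [simp]: "length (finv w) = length w"
  by (simp_all add: finv_def rev_map comp_def)

lemma reduce_cancel: "reduce (w @ finv w @ v) = reduce v"
proof (induction w arbitrary: v)
  case (Cons a w)
  have "reduce ((a # w) @ finv (a # w) @ v) = red_cons a (reduce (linv a # v))"
    using Cons.IH[of "linv a # v"] by (simp add: reduce_Cons)
  also have "\<dots> = reduce v"
    by (simp add: reduce_Cons red_cons_linv_cancel)
  finally show ?case .
qed simp

lemma reduce_cancel': "reduce (finv w @ w @ v) = reduce v"
  using reduce_cancel[of "finv w" v] by simp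

lemma Nil_in_F2
 [simp]: "[] \<in> F2"
  by (simp add: F2_def)

lemma fmult_in_F2 [simp]: "fmult u v \<in> F2"
  by (simp add: fmult_def F2_def)

lemma fmult_Nil [simp]: "w \<in> F2 \<Longrightarrow> fmult [] w = w"
  by (simp add: fmult_def F2_def reduce_reduced)

lemma fmult_finv_right: "fmult (finv g) g = []"
  using reduce_cancel'[of g "[]"] by (simp add: fmult_def)

lemma fmult_fmult_finv: "w \<in> F2 \<Longrightarrow> fmult g (fmult (finv g) w) = w"
  by (simp add: fmult_def F2_def reduce_cancel reduce_reduced)

lemma fmult_finv_fmult: "w \<in> F2 \<Longrightarrow> fmult (finv g) (fmult g w) = w"
  by (simp add: fmult_def F2_def reduce_cancel' reduce_reduced)

lemma inj_on_fmult: "inj_on (fmult g) F2"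
  by (metis fmult_finv_fmult inj_onI)

lemma length_fmult_finv_append:
  "length (fmult (finv (c @ u)) (reduce (c @ v))) \<le> length u + length v"
proof -
  have "fmult (finv (c @ u)) (reduce (c @ v)) = reduce ((finv u @ finv c) @ c @ v)"
    unfolding fmult_def finv_append by (rule reduce_append_reduce)
  also have "\<dots> = reduce (finv u @ v)"
    by (metis append_assoc reduce_append_reduce reduce_cancel')
  finally show ?thesis
    using length_reduce_le[of "finv u @ v"] by simp
qed

lemma foldr_red_cons_take_drop:
  assumes "reduced g"
  shows "\<exists>i j. foldr red_cons g z = take i g @ drop j z \<and> j \<le> length z \<and> length g \<le> i + j"
  using assms
proof (induction g)
  case Nil
  then show ?case by (intro exI[of _ 0]) auto
next
  case (Cons a g)
  from Cons.prems have "reduced g"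
    by (rule reduced_ConsD)
  with Cons.IH obtain i j where ij: "foldr red_cons g z = take i g @ drop j z"
    "j \<le> length z" "length g \<le> i + j"
    by blast
  show ?case
  proof (cases "take i g @ drop j z")
    case Nil
    with ij show ?thesis
      by (intro exI[of _ "Suc i"] exI[of _ j]) auto
  next
    case (Cons b rest)
    show ?thesis
    proof (cases "b = linv a")
      case False
      with ij Cons show ?thesis
        by (intro exI[of _ "Suc i"] exI[of _ j]) auto
    next
      case True
      have "take i g = []"
      proof (rule ccontr)
        assume "take i g \<noteq> []"
        with Cons obtain g' where "g = b # g'"
          by (cases g; cases i) auto
        with Cons.prems True show False
          by auto
      qed
      with Cons have dz: "drop j z = b # rest"
        by simp
      then have "drop (Suc j) z = rest" "Suc j \<le> length z"
        by (metis drop_Suc tl_drop list.sel(3), metis Suc_leI drop_eq_Nil2 leI list.distinct(1))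
      with ij Cons True \<open>take i g = []\<close> show ?thesis
        by (intro exI[of _ 0] exI[of _ "Suc j"]) (cases i; auto)
    qed
  qed
qed

lemma F2_neighbour:
  assumes "g \<in> F2" "g' \<in> F2"
  defines "h \<equiv> fmult (finv g) g'"
  shows "take (length g - length h) g' = take (length g - length h) g"
    and "length g' \<le> length g + length h" and "length g \<le> length g' + length h"
proof -
  have "g' = fmult g h"
    unfolding h_def using assms by (simp add: fmult_fmult_finv)
  also have "\<dots> = foldr red_cons g (reduce h)"
    by (simp only: fmult_def reduce_append)
  also have "\<dots> = foldr red_cons g h"
    unfolding h_def by (simp add: fmult_def reduce_reduced)
  finally obtain i j where ij: "g' = take i g @ drop j h" "j \<le> length h" "length g \<le> i + j"
    using foldr_red_cons_take_drop assms(1) unfolding F2_def by blast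
  moreover from ij have "length g - length h \<le> i"
    by linarith
  ultimately show "take (length g - length h) g' = take (length g - length h) g"
    by (simp add: take_append min_def)
  from ij show "length g' \<le> length g + length h" "length g \<le> length g' + length h"
    by auto
qed

lemma finite_letter: "finite (UNIV :: letter set)"
  and card_letter: "card (UNIV :: letter set) = 4"
proof -
  have gen: "(UNIV :: gen set) = {GX, GY}"
    using gen.exhaust by auto
  then have letter: "(UNIV :: letter set) = {GX, GY} \<times> UNIV"
    by (metis UNIV_Times_UNIV)
  show "finite (UNIV :: letter set)"
    unfolding letter by simp
  show "card (UNIV :: letter set) = 4"
    unfolding letter by (simp add: card_cartesian_product)
qed

lemma finite_short_words: "finite {v :: letter list. length v \<le> K}"
  using finite_lists_length_le[OF finite_letter, of K] by simp

lemma card_short_words: "card {v :: letter list. length v \<le> K} \<le> 4 ^ (K + 1)"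
proof -
  have "card {v :: letter list. length v \<le> K} = (\<Sum>i\<le>K. 4 ^ i)"
    using card_lists_length_le[OF finite_letter, of K] unfolding card_letter by simp
  also have "\<dots> \<le> 4 ^ (K + 1)"
    by (induction K) simp_all
  finally show ?thesis .
qed

lemma positive_word_reduced: "set w \<subseteq> {(GX, False), (GY, False)} \<Longrightarrow> reduced w"
  by (induction w rule: reduced.induct) (auto simp: linv_def)

section \<open>Word length in the lamplighter group\<close>

definition letter_gen :: "letter \<Rightarrow> lelem" where
  "letter_gen l = ({}, [l])"

lemma symgens_eq:
  "symgens = {gen_u, letter_gen (GX, False), letter_gen (GY, False),
              letter_gen (GX, True), letter_gen (GY, True)}"
  by (auto simp: symgens_def lgens_def linvw_def gen_u_def gen_x_def gen_y_def letter_gen_def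
      fmult_def linv_def)

lemma gen_u_in_symgens: "gen_u \<in> symgens"
  by (simp add: symgens_eq)

lemma letter_gen_in_symgens: "letter_gen l \<in> symgens"
proof -
  obtain x b where "l = (x, b)"
    by fastforce
  then show ?thesis
    by (cases x; cases b) (auto simp: symgens_eq)
qed

lemma lmult_letter_gen: "lmult (letter_gen l) (A, h) = ((\<lambda>a. reduce (l # a)) ` A, reduce (l # h))"
  by (auto simp: lmult_def letter_gen_def fmult_def)

lemma image_sym_diff:
  assumes "inj_on f (A \<union> B)"
  shows "f ` sym_diff A B = sym_diff (f ` A) (f ` B)"
proof -
  have "f ` (A - B) = f ` A - f ` B" "f ` (B - A) = f ` B - f ` A"
    by (auto intro!: inj_on_image_set_diff[OF assms])
  then show ?thesis
    by (simp add: image_Un)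
qed

lemma image_fmult_Nil: "A \<subseteq> F2 \<Longrightarrow> fmult [] ` A = A"
  by (simp add: subset_iff cong: image_cong)

lemma foldr_lmult_letter_gens:
  assumes "A \<subseteq> F2" "h \<in> F2"
  shows "foldr lmult (map letter_gen w) (A, h) = ((\<lambda>a. reduce (w @ a)) ` A, reduce (w @ h))"
proof (induction w)
  case Nil
  have "(\<lambda>a. reduce a) ` A = A"
    using assms(1) by (force simp: F2_def reduce_reduced)
  with assms(2) show ?case
    by (simp add: F2_def reduce_reduced)
next
  case (Cons l w)
  then show ?case
    by (simp add: lmult_letter_gen image_image)
qed

definition toggle_word :: "letter list \<Rightarrow> lelem list" where
  "toggle_word s = map letter_gen s @ gen_u # map letter_gen (finv s)"

lemma foldr_lmult_toggle_word:
  assumes "A \<subseteq> F2" "h \<in> F2" "s \<in> F2"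
  shows "foldr lmult (toggle_word s) (A, h) = (sym_diff {s} A, h)"
proof -
  define A1 where "A1 = (\<lambda>a. reduce (finv s @ a)) ` A"
  define h1 where "h1 = reduce (finv s @ h)"
  have A1: "A1 \<subseteq> F2" and h1: "h1 \<in> F2"
    by (auto simp: A1_def h1_def F2_def)
  then have "sym_diff {[]} A1 \<subseteq> F2"
    by auto
  from A1 h1 have "lmult gen_u (A1, h1) = (sym_diff {[]} A1, h1)"
    by (simp add: lmult_def gen_u_def Let_def image_fmult_Nil)
  then have "foldr lmult (toggle_word s) (A, h) = foldr lmult (map letter_gen s) (sym_diff {[]} A1, h1)"
    using assms by (simp add: toggle_word_def foldr_lmult_letter_gens A1_def h1_def)
  also have "\<dots> = ((\<lambda>a. reduce (s @ a)) ` sym_diff {[]} A1, reduce (s @ h1))"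
    using \<open>sym_diff {[]} A1 \<subseteq> F2\<close> h1 by (rule foldr_lmult_letter_gens)
  also have "reduce (s @ h1) = h"
    using assms by (simp add: h1_def reduce_cancel F2_def reduce_reduced)
  also have "(\<lambda>a. reduce (s @ a)) ` sym_diff {[]} A1 = sym_diff {s} A"
  proof -
    have "{[]} \<union> A1 \<subseteq> F2"
      using A1 by simp
    then have inj: "inj_on (\<lambda>a. reduce (s @ a)) ({[]} \<union> A1)"
      using inj_on_fmult[of s] unfolding fmult_def by (rule inj_on_subset[rotated])
    have "(\<lambda>a. reduce (s @ a)) ` {[]} = {s}"
      using assms(3) by (simp add: F2_def reduce_reduced)
    moreover have "(\<lambda>a. reduce (s @ a)) ` A1 = A"
      using assms(1) by (force simp: A1_def image_image reduce_cancel F2_def reduce_reduced)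
    ultimately show ?thesis
      by (simp add: image_sym_diff[OF inj])
  qed
  finally show ?thesis .
qed

lemma lprod_append: "lprod (xs @ ys) = foldr lmult xs (lprod ys)"
  by (simp add: lprod_def)

lemma wordlen_le_length: "set ws \<subseteq> symgens \<Longrightarrow> wordlen (lprod ws) \<le> length ws"
  unfolding wordlen_def by (rule Least_le) blast

lemma wordlen_Nil: "wordlen ({}, []) = 0"
  using wordlen_le_length[of "[]"] by (simp add: lprod_def lone_def)

lemma exists_word:
  assumes "finite F" "F \<subseteq> F2" "h \<in> F2"
  shows "\<exists>ws. set ws \<subseteq> symgens \<and> lprod ws = (F, h) \<and>
             length ws \<le> (\<Sum>s\<in>F. 2 * length s + 1) + length h"
  using assms
proof (induction F rule: finite_induct)
  case empty
  have "lprod (map letter_gen h) = ({}, h)"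
    using empty by (simp add: lprod_def lone_def foldr_lmult_letter_gens F2_def reduce_reduced)
  then show ?case
    using letter_gen_in_symgens by (intro exI[of _ "map letter_gen h"]) auto
next
  case (insert s F)
  then obtain ws where ws: "set ws \<subseteq> symgens" "lprod ws = (F, h)"
     "length ws \<le> (\<Sum>s\<in>F. 2 * length s + 1) + length h"
    by auto
  have "lprod (toggle_word s @ ws) = (insert s F, h)"
    using insert ws by (auto simp: lprod_append foldr_lmult_toggle_word)
  moreover have "set (toggle_word s @ ws) \<subseteq> symgens"
    using ws by (auto simp: toggle_word_def gen_u_in_symgens letter_gen_in_symgens)
  moreover have "length (toggle_word s @ ws) \<le> (\<Sum>s\<in>insert s F. 2 * length s + 1) + length h"
    using ws insert by (simp add: toggle_word_def)
  ultimately show ?case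
    by blast
qed

lemma wordlen_le_sum:
  assumes "finite F" "F \<subseteq> F2" "h \<in> F2"
  shows "wordlen (F, h) \<le> (\<Sum>s\<in>F. 2 * length s + 1) + length h"
  using exists_word[OF assms] wordlen_le_length order_trans by metis

lemma wordlen_singleton: "s \<in> F2 \<Longrightarrow> wordlen ({s}, []) \<le> 2 * length s + 1"
  using wordlen_le_sum[of "{s}" "[]"] by simp

lemma lmult_symgens_bounds:
  assumes "a \<in> symgens" "lmult a (E0, h0) = (E, h)" "finite E0" "\<And>e. e \<in> E0 \<Longrightarrow> length e \<le> k"
  shows "finite E" "card E \<le> card E0 + 1" "length h \<le> length h0 + 1" "e \<in> E \<Longrightarrow> length e \<le> k + 1"
proof -
  obtain S g where a: "a = (S, g)"
    by fastforce
  have S: "S \<subseteq> {[]}" and g: "length g \<le> 1"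
    using assms(1) a by (auto simp: symgens_eq gen_u_def letter_gen_def)
  have E: "E \<subseteq> S \<union> fmult g ` E0" and h: "h = fmult g h0"
    using assms(2) a by (auto simp: lmult_def Let_def)
  have short: "length (fmult g x) \<le> length x + 1" for x
    using length_reduce_le[of "g @ x"] g by (simp add: fmult_def)
  have "finite S"
    using S finite_subset by blast
  with assms(3) E show "finite E"
    by (blast intro: finite_subset)
  have "card E \<le> card S + card (fmult g ` E0)"
    using card_mono[OF _ E] card_Un_le[of S "fmult g ` E0"] assms(3) \<open>finite S\<close> by simp
  moreover have "card S \<le> card {[] :: letter list}"
    using S by (intro card_mono) simp_all
  moreover have "card (fmult g ` E0) \<le> card E0"
    using assms(3) by (rule card_image_le)
  ultimately show "card E \<le> card E0 + 1"
    by simp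
  from h short show "length h \<le> length h0 + 1"
    by simp
  assume "e \<in> E"
  with E S consider "e = []" | x where "x \<in> E0" "e = fmult g x"
    by blast
  then show "length e \<le> k + 1"
  proof cases
    case 2
    with assms(4) short[of x] show ?thesis
      by fastforce
  qed simp
qed

lemma lprod_bounds:
  assumes "set ws \<subseteq> symgens" "lprod ws = (E, h)"
  shows "finite E \<and> card E \<le> length ws \<and> length h \<le> length ws \<and> (\<forall>e\<in>E. length e \<le> length ws)"
  using assms
proof (induction ws arbitrary: E h)
  case Nil
  then show ?case
    by (simp add: lprod_def lone_def)
next
  case (Cons a ws)
  obtain E0 h0 where ws: "lprod ws = (E0, h0)"
    by fastforce
  with Cons have IH: "finite E0" "card E0 \<le> length ws" "length h0 \<le> length ws"
    "\<And>e. e \<in> E0 \<Longrightarrow> length e \<le> length ws"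
    by auto
  have "lmult a (E0, h0) = (E, h)"
    using Cons.prems(2) ws by (simp add: lprod_def)
  note step = lmult_symgens_bounds[OF _ this IH(1,4)]
  from Cons.prems(1) have "a \<in> symgens"
    by simp
  with step IH(2,3) show ?case
    by fastforce
qed

lemma wordlen_bounds:
  assumes "(E, h) \<in> lamp_carrier"
  shows "card E \<le> wordlen (E, h)" "length h \<le> wordlen (E, h)"
    "e \<in> E \<Longrightarrow> length e \<le> wordlen (E, h)"
proof -
  from assms have "finite E" "E \<subseteq> F2" "h \<in> F2"
    by (auto simp: lamp_carrier_def)
  then obtain ws0 where "set ws0 \<subseteq> symgens" "lprod ws0 = (E, h)"
    using exists_word by blast
  then obtain ws where ws: "set ws \<subseteq> symgens" "lprod ws = (E, h)" "length ws = wordlen (E, h)"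
    using LeastI_ex[of "\<lambda>n. \<exists>ws. length ws = n \<and> set ws \<subseteq> symgens \<and> lprod ws = (E, h)"]
    unfolding wordlen_def by blast
  from lprod_bounds[OF ws(1,2)] ws(3) show "card E \<le> wordlen (E, h)" "length h \<le> wordlen (E, h)"
    "e \<in> E \<Longrightarrow> length e \<le> wordlen (E, h)"
    by simp_all
qed

lemma lmult_linvw:
  assumes "A \<subseteq> F2" "B \<subseteq> F2"
  shows "lmult (linvw (A, g)) (B, g') = (fmult (finv g) ` sym_diff A B, fmult (finv g) g')"
proof -
  have "inj_on (fmult (finv g)) (A \<union> B)"
    using inj_on_fmult assms by (blast intro: inj_on_subset)
  then show ?thesis
    by (simp add: lmult_def linvw_def Let_def image_sym_diff)
qed

lemma ldist_flat:
  assumes "A \<subseteq> F2" "B \<subseteq> F2"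
  shows "ldist (A, []) (B, []) = wordlen (sym_diff A B, [])"
proof -
  have "fmult [] ` sym_diff A B = sym_diff A B"
    using assms by (intro image_fmult_Nil) auto
  with assms show ?thesis
    by (simp add: ldist_def lmult_linvw)
qed

lemma ldist_self: "ldist (A, g) (A, g) = 0"
  by (simp add: ldist_def lmult_def linvw_def fmult_finv_right wordlen_Nil)

lemma ldist_flat_commute: "A \<subseteq> F2 \<Longrightarrow> B \<subseteq> F2 \<Longrightarrow> ldist (A, []) (B, []) = ldist (B, []) (A, [])"
  by (simp add: ldist_flat Un_commute)

lemma card_sym_diff_le_ldist_flat:
  assumes "finite A" "finite B" "A \<subseteq> F2" "B \<subseteq> F2"
  shows "card (sym_diff A B) \<le> ldist (A, []) (B, [])"
proof -
  have "(sym_diff A B, []) \<in> lamp_carrier"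
    using assms by (auto simp: lamp_carrier_def)
  then show ?thesis
    using wordlen_bounds(1) assms(3,4) by (simp add: ldist_flat)
qed

lemma ldist_flat_toggle:
  assumes "A \<subseteq> F2" "s \<in> F2"
  shows "ldist (A, []) (sym_diff A {s}, []) \<le> 2 * length s + 1"
proof -
  have "sym_diff A (sym_diff A {s}) = {s}"
    by blast
  moreover have "sym_diff A {s} \<subseteq> F2"
    using assms by blast
  ultimately have "ldist (A, []) (sym_diff A {s}, []) = wordlen ({s}, [])"
    using ldist_flat[OF assms(1)] by simp
  with wordlen_singleton[OF assms(2)] show ?thesis
    by simp
qed

section \<open>Chains of close points\<close>

lemma rconn_mem: "rconn Y d r p q \<Longrightarrow> p \<in> Y \<and> q \<in> Y"
  by (induction rule: rconn.induct) auto

lemma rconn_trans: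
  assumes "rconn Y d r p q" "rconn Y d r q q'"
  shows "rconn Y d r p q'"
  using assms(2,1)
proof (induction rule: rconn.induct)
  case (step q q' q'')
  from step.IH[OF step.prems] step.hyps(2,3) show ?case
    by (rule rconn.step)
qed

lemma rconn_sym:
  assumes "rconn Y d r p q" and "\<And>a b. a \<in> Y \<Longrightarrow> b \<in> Y \<Longrightarrow> d a b = d b a"
  shows "rconn Y d r q p"
  using assms(1)
proof (induction rule: rconn.induct)
  case (refl p)
  then show ?case
    by (rule rconn.refl)
next
  case (step p q q')
  have "q \<in> Y"
    using rconn_mem[OF step.hyps(1)] by blast
  moreover have "d q' q < r"
    using step.hyps(3) assms(2)[OF \<open>q \<in> Y\<close> step.hyps(2)] by simp
  ultimately have "rconn Y d r q' q"
    by (rule rconn.step[OF rconn.refl[OF step.hyps(2)]])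
  then show ?case
    using step.IH by (rule rconn_trans)
qed

lemma rconn_map:
  assumes "rconn Y (\<lambda>a b. d (f a) (f b)) r p q" "f ` Y \<subseteq> Z"
  shows "rconn Z d r (f p) (f q)"
  using assms(1)
proof (induction rule: rconn.induct)
  case (refl p)
  with assms(2) have "f p \<in> Z"
    by blast
  then show ?case
    by (rule rconn.refl)
next
  case (step p q q')
  with assms(2) have "f q' \<in> Z"
    by blast
  from step.IH this step.hyps(3) show ?case
    by (rule rconn.step)
qed

lemma symp_rconn: "(\<And>a b. a \<in> Y \<Longrightarrow> b \<in> Y \<Longrightarrow> d a b = d b a) \<Longrightarrow> symp (rconn Y d r)"
  by (blast intro: sympI rconn_sym)

lemma transp_rconn: "transp (rconn Y d r)"
  by (blast intro: transpI rconn_trans)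

section \<open>Lower bound\<close>

lemma exists_class_rep:
  assumes "symp R" "transp R"
  obtains rep where "\<And>A B. R A B \<Longrightarrow> R A (rep A)" "\<And>A B. R A B \<Longrightarrow> rep B = rep A"
proof -
  define rep where "rep A = (SOME B. R A B)" for A
  have rep: "R A (rep A)" if "R A B" for A B
    unfolding rep_def using that by (rule someI)
  have rep_eq: "rep B = rep A" if "R A B" for A B
  proof -
    have "R B A"
      using assms(1) that by (rule sympD)
    then have "R B C \<longleftrightarrow> R A C" for C
      using transpD[OF assms(2)] that by blast
    then have "R B = R A"
      by blast
    then show ?thesis
      by (simp add: rep_def)
  qed
  show thesis
    by (rule that[OF rep rep_eq])
qed

lemma card_Sigma_Diff_ge:
  fixes \<delta> :: real
  assumes "finite X" "finite S" "\<And>A. A \<in> X \<Longrightarrow> D A \<subseteq> S \<and> card (D A) \<le> \<delta>"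
  shows "real (card X) * (real (card S) - \<delta>) \<le> card (Sigma X (\<lambda>A. S - D A))"
proof -
  have "real (card X) * (real (card S) - \<delta>) = (\<Sum>A\<in>X. real (card S) - \<delta>)"
    by simp
  also have "\<dots> \<le> (\<Sum>A\<in>X. real (card (S - D A)))"
  proof (rule sum_mono)
    fix A
    assume "A \<in> X"
    with assms(2,3) have "card (S - D A) = card S - card (D A)" "card (D A) \<le> card S"
      by (blast intro: card_Diff_subset finite_subset card_mono)+
    with assms(3)[OF \<open>A \<in> X\<close>] show "real (card S) - \<delta> \<le> real (card (S - D A))"
      by simp
  qed
  also have "\<dots> = card (Sigma X (\<lambda>A. S - D A))"
    using assms(1,2) by (simp add: card_SigmaI)
  finally show ?thesis .
qed

text \<open>Flipping \<open>s\<close> moves it from outside to inside the difference with the representative.\<close>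
lemma card_flip_pairs_le:
  assumes "finite (Sigma Dom (\<lambda>B. sym_diff B (rep B)))"
    and "\<And>A s. A \<in> X \<Longrightarrow> s \<in> S \<Longrightarrow> sym_diff A {s} \<in> Dom \<and> rep (sym_diff A {s}) = rep A"
  shows "card (Sigma X (\<lambda>A. S - sym_diff A (rep A))) \<le> card (Sigma Dom (\<lambda>B. sym_diff B (rep B)))"
proof (rule card_inj_on_le[OF _ _ assms(1)])
  show "inj_on (\<lambda>(A, s). (sym_diff A {s}, s)) (Sigma X (\<lambda>A. S - sym_diff A (rep A)))"
    by (auto simp: inj_on_def)
  show "(\<lambda>(A, s). (sym_diff A {s}, s)) ` Sigma X (\<lambda>A. S - sym_diff A (rep A))
      \<subseteq> Sigma Dom (\<lambda>B. sym_diff B (rep B))"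
  proof
    fix p
    assume "p \<in> (\<lambda>(A, s). (sym_diff A {s}, s)) ` Sigma X (\<lambda>A. S - sym_diff A (rep A))"
    then obtain A s where "A \<in> X" "s \<in> S" "s \<notin> sym_diff A (rep A)" "p = (sym_diff A {s}, s)"
      by auto
    with assms(2)[OF \<open>A \<in> X\<close> \<open>s \<in> S\<close>] show "p \<in> Sigma Dom (\<lambda>B. sym_diff B (rep B))"
      by auto
  qed
qed

text \<open>Double counting on the Hamming cube \<open>Pow S\<close>, where \<open>R\<close> is the relation of lying in the same
  component and \<open>X\<close> is a set of points whose neighbours all lie in their own component.\<close>
lemma cube_class_card_bound:
  fixes S :: "'a set" and R :: "'a set \<Rightarrow> 'a set \<Rightarrow> bool" and X :: "'a set set" and \<delta> :: real
  assumes S: "finite S" and \<delta>: "0 \<le> \<delta>"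
    and R_sym: "symp R" and R_trans: "transp R"
    and R_sub: "\<And>A B. R A B \<Longrightarrow> A \<subseteq> S"
    and R_diam: "\<And>A B. R A B \<Longrightarrow> card (sym_diff A B) \<le> \<delta>"
    and X_refl: "\<And>A. A \<in> X \<Longrightarrow> R A A"
    and X_flip: "\<And>A s. A \<in> X \<Longrightarrow> s \<in> S \<Longrightarrow> R A (sym_diff A {s})"
  shows "real (card X) * (real (card S) - \<delta>) \<le> 2 ^ card S * \<delta>"
proof -
  obtain rep where R_rep: "\<And>A B. R A B \<Longrightarrow> R A (rep A)" and rep_eq: "\<And>A B. R A B \<Longrightarrow> rep B = rep A"
    by (rule exists_class_rep[OF R_sym R_trans]) (rule that)
  have diff_sub: "sym_diff A (rep A) \<subseteq> S" and diff_card: "card (sym_diff A (rep A)) \<le> \<delta>"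
    if "R A A" for A
  proof -
    have "R A (rep A)"
      using that by (rule R_rep)
    moreover from this have "R (rep A) A"
      by (rule sympD[OF R_sym])
    ultimately show "sym_diff A (rep A) \<subseteq> S" "card (sym_diff A (rep A)) \<le> \<delta>"
      using R_sub R_diam by blast+
  qed
  define Dom where "Dom = {B. R B B}"
  have "Dom \<subseteq> Pow S"
    using R_sub by (auto simp: Dom_def)
  then have "finite Dom"
    using S by (rule finite_subset[OF _ finite_Pow_iff[THEN iffD2]])
  have "finite X"
    using X_refl R_sub S by (blast intro: finite_subset[of X "Pow S"])
  have "real (card X) * (real (card S) - \<delta>) \<le> card (Sigma X (\<lambda>A. S - sym_diff A (rep A)))"
    using \<open>finite X\<close> S diff_sub diff_card X_refl by (intro card_Sigma_Diff_ge) blast+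
  also have "\<dots> \<le> card (Sigma Dom (\<lambda>B. sym_diff B (rep B)))"
  proof (intro of_nat_mono card_flip_pairs_le)
    show "finite (Sigma Dom (\<lambda>B. sym_diff B (rep B)))"
      using \<open>finite Dom\<close> diff_sub S by (intro finite_SigmaI) (auto simp: Dom_def intro: finite_subset)
    fix A s
    assume "A \<in> X" "s \<in> S"
    then have flip: "R A (sym_diff A {s})"
      by (rule X_flip)
    have "R (sym_diff A {s}) (sym_diff A {s})"
      using transpD[OF R_trans sympD[OF R_sym flip] flip] .
    with rep_eq[OF flip] show "sym_diff A {s} \<in> Dom \<and> rep (sym_diff A {s}) = rep A"
      unfolding Dom_def by simp
  qed
  also have "\<dots> = (\<Sum>B\<in>Dom. real (card (sym_diff B (rep B))))"
    using \<open>finite Dom\<close> diff_sub S by (subst card_SigmaI) (auto simp: Dom_def intro: finite_subset)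
  also have "\<dots> \<le> real (card Dom) * \<delta>"
    using sum_mono[of Dom _ "\<lambda>_. \<delta>"] diff_card by (simp add: Dom_def)
  also have "\<dots> \<le> 2 ^ card S * \<delta>"
    using card_mono[OF _ \<open>Dom \<subseteq> Pow S\<close>] S \<delta>
    by (intro mult_right_mono) (simp_all add: card_Pow flip: of_nat_le_iff)
  finally show ?thesis
    by simp
qed

lemma card_le_of_cube_cover:
  fixes S :: "'a set" and R :: "nat \<Rightarrow> 'a set \<Rightarrow> 'a set \<Rightarrow> bool" and \<delta> :: real
  assumes S: "finite S" and \<delta>: "0 \<le> \<delta>"
    and R_sym: "\<And>i. symp (R i)" and R_trans: "\<And>i. transp (R i)"
    and R_sub: "\<And>i A B. R i A B \<Longrightarrow> A \<subseteq> S"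
    and R_diam: "\<And>i A B. i \<le> n \<Longrightarrow> R i A B \<Longrightarrow> card (sym_diff A B) \<le> \<delta>"
    and cover: "\<And>A. A \<subseteq> S \<Longrightarrow> \<exists>i\<le>n. R i A A \<and> (\<forall>s\<in>S. R i A (sym_diff A {s}))"
  shows "real (card S) \<le> (real n + 2) * \<delta>"
proof -
  define c where "c A = (SOME i. i \<le> n \<and> R i A A \<and> (\<forall>s\<in>S. R i A (sym_diff A {s})))" for A
  have c: "c A \<le> n \<and> R (c A) A A \<and> (\<forall>s\<in>S. R (c A) A (sym_diff A {s}))" if "A \<subseteq> S" for A
    unfolding c_def by (rule someI_ex[OF cover[OF that]])
  define X where "X i = {A \<in> Pow S. c A = i}" for i
  have class_bound: "real (card (X i)) * (real (card S) - \<delta>) \<le> 2 ^ card S * \<delta>" if "i \<le> n" for i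
  proof (rule cube_class_card_bound[OF S \<delta> R_sym R_trans R_sub R_diam[OF that]])
    fix A
    assume "A \<in> X i"
    then have "A \<subseteq> S" "c A = i"
      by (auto simp: X_def)
    with c[of A] show "R i A A" "\<And>s. s \<in> S \<Longrightarrow> R i A (sym_diff A {s})"
      by auto
  qed
  have "Pow S = (\<Union>i\<le>n. X i)"
    using c by (auto simp: X_def)
  moreover have "finite (X i)" for i
    using S by (simp add: X_def)
  ultimately have "card (Pow S) = (\<Sum>i\<le>n. card (X i))"
    by (simp only:) (rule card_UN_disjoint, auto simp: X_def)
  then have "(2::real) ^ card S = (\<Sum>i\<le>n. real (card (X i)))"
    using S by (metis card_Pow of_nat_numeral of_nat_power of_nat_sum)
  then have "2 ^ card S * (real (card S) - \<delta>) = (\<Sum>i\<le>n. real (card (X i)) * (real (card S) - \<delta>))"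
    by (simp add: sum_distrib_right)
  also have "\<dots> \<le> (\<Sum>i\<le>n. 2 ^ card S * \<delta>)"
    by (rule sum_mono) (simp add: class_bound)
  also have "\<dots> = 2 ^ card S * ((real n + 1) * \<delta>)"
    by simp
  finally have "real (card S) - \<delta> \<le> (real n + 1) * \<delta>"
    by simp
  then show ?thesis
    by (simp add: algebra_simps)
qed

lemma card_le_of_lamp_cover:
  assumes S: "finite S" "S \<subseteq> F2" and short: "\<And>s. s \<in> S \<Longrightarrow> real (2 * length s + 1) < r"
    and "0 < r" "0 \<le> \<delta>"
    and U_ball: "\<And>x. x \<in> lamp_carrier \<Longrightarrow> \<exists>i\<le>n. {y\<in>lamp_carrier. ldist x y < r} \<subseteq> U i"
    and U_diam: "\<And>i p q. i \<le> n \<Longrightarrow> rconn (U i) ldist r p q \<Longrightarrow> ldist p q \<le> \<delta>"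
  shows "real (card S) \<le> (real n + 2) * \<delta>"
proof -
  define V where "V i = {A. A \<subseteq> S \<and> (A, []) \<in> U i}" for i
  define flat where "flat A = (A, [] :: letter list)" for A :: "letter list set"
  have flat_carrier: "flat A \<in> lamp_carrier" if "A \<subseteq> S" for A
    using that S by (auto simp: flat_def lamp_carrier_def intro: finite_subset)
  let ?R = "\<lambda>i. rconn (V i) (\<lambda>A B. ldist (flat A) (flat B)) r"
  show ?thesis
  proof (rule card_le_of_cube_cover[OF S(1) \<open>0 \<le> \<delta>\<close>, where R = ?R])
    show "symp (?R i)" for i
      using S(2) by (intro symp_rconn) (auto simp: V_def flat_def ldist_flat_commute)
    show "transp (?R i)" for i
      by (rule transp_rconn)
    show "A \<subseteq> S" if "?R i A B" for i A B
      using rconn_mem[OF that] by (simp add: V_def)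
    show "card (sym_diff A B) \<le> \<delta>" if "i \<le> n" "?R i A B" for i A B
    proof -
      have "rconn (U i) ldist r (flat A) (flat B)"
        using that(2) by (rule rconn_map) (auto simp: V_def flat_def)
      with that(1) have "ldist (flat A) (flat B) \<le> \<delta>"
        by (rule U_diam)
      moreover have "A \<subseteq> S" "B \<subseteq> S"
        using rconn_mem[OF that(2)] by (simp_all add: V_def)
      moreover from this have "card (sym_diff A B) \<le> ldist (flat A) (flat B)"
        unfolding flat_def using S by (intro card_sym_diff_le_ldist_flat) (auto intro: finite_subset)
      ultimately show ?thesis
        by linarith
    qed
    fix A
    assume "A \<subseteq> S"
    then obtain i where "i \<le> n" and ball: "{y\<in>lamp_carrier. ldist (flat A) y < r} \<subseteq> U i"
      using U_ball flat_carrier by blast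
    have in_V: "B \<in> V i" if "B \<subseteq> S" "ldist (flat A) (flat B) < r" for B
      using that ball flat_carrier by (auto simp: V_def flat_def)
    have "A \<in> V i"
      using in_V[OF \<open>A \<subseteq> S\<close>] \<open>0 < r\<close> by (simp add: flat_def ldist_self)
    then have "?R i A A"
      by (rule rconn.refl)
    moreover have "?R i A (sym_diff A {s})" if "s \<in> S" for s
    proof -
      have "A \<subseteq> F2" "s \<in> F2"
        using \<open>A \<subseteq> S\<close> that S(2) by blast+
      then have "ldist (flat A) (flat (sym_diff A {s})) < r"
        using ldist_flat_toggle[of A s] short[OF that] unfolding flat_def by linarith
      moreover from this have "sym_diff A {s} \<in> V i"
        using \<open>A \<subseteq> S\<close> that by (intro in_V) auto
      ultimately show ?thesis
        using \<open>?R i A A\<close> by (blast intro: rconn.step)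
    qed
    ultimately show "\<exists>i\<le>n. ?R i A A \<and> (\<forall>s\<in>S. ?R i A (sym_diff A {s}))"
      using \<open>i \<le> n\<close> by blast
  qed
qed

lemma card_le_control_fn:
  assumes cf: "control_fn lamp_carrier ldist n D"
    and S: "finite S" "S \<subseteq> F2" and short: "\<And>s. s \<in> S \<Longrightarrow> real (2 * length s + 1) < r"
  shows "ennreal (card S) \<le> ennreal (real n + 2) * D r"
proof (cases "S = {} \<or> D r = \<infinity>")
  case True
  then show ?thesis
    by (auto simp: ennreal_mult_top)
next
  case False
  then obtain s0 where "s0 \<in> S"
    by blast
  have "0 \<le> real (2 * length s0 + 1)"
    by simp
  with short[OF \<open>s0 \<in> S\<close>] have "0 < r"
    by linarith
  from False obtain \<delta> where \<delta>: "D r = ennreal \<delta>" "0 \<le> \<delta>"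
    by (cases "D r") auto
  from cf[unfolded control_fn_def, rule_format, OF \<open>0 < r\<close>] obtain U :: "nat \<Rightarrow> lelem set" where
    U_ball: "\<forall>x\<in>lamp_carrier. \<exists>i\<le>n. {y\<in>lamp_carrier. ldist x y < r} \<subseteq> U i" and
    U_diam: "\<forall>i\<le>n. \<forall>p q. rconn (U i) ldist r p q \<longrightarrow> ennreal (ldist p q) \<le> D r"
    by (elim exE conjE) (rule that)
  have "real (card S) \<le> (real n + 2) * \<delta>"
  proof (rule card_le_of_lamp_cover[OF S short \<open>0 < r\<close> \<delta>(2)])
    show "\<exists>i\<le>n. {y\<in>lamp_carrier. ldist x y < r} \<subseteq> U i" if "x \<in> lamp_carrier" for x
      using U_ball that by (rule bspec)
    show "ldist p q \<le> \<delta>" if "i \<le> n" "rconn (U i) ldist r p q" for i p q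
    proof -
      have "ennreal (ldist p q) \<le> ennreal \<delta>"
        using U_diam that unfolding \<delta>(1) by blast
      with \<delta>(2) show ?thesis
        by simp
    qed
  qed
  then have "ennreal (card S) \<le> ennreal ((real n + 2) * \<delta>)"
    by (rule ennreal_leI)
  with \<delta> show ?thesis
    by (simp add: ennreal_mult)
qed

lemma control_fn_dominates_exp:
  assumes "control_fn lamp_carrier ldist n D"
  shows "weakly_dominates D (\<lambda>t. ennreal (2 powr t))"
  unfolding weakly_dominates_def
proof (intro exI conjI allI impI)
  fix t :: real
  assume "0 \<le> t"
  define R where "R = nat \<lfloor>t\<rfloor> + 1"
  define S where "S = {w. set w \<subseteq> {(GX, False), (GY, False)} \<and> length w = R}"
  have "finite S" "card S = 2 ^ R"
    unfolding S_def by (simp_all add: finite_lists_length_eq card_lists_length_eq numeral_2_eq_2)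
  have "S \<subseteq> F2"
    unfolding S_def F2_def using positive_word_reduced by blast
  have "real (2 * length s + 1) < (real n + 2) * t + 4" if "s \<in> S" for s
  proof -
    have "2 * t \<le> (real n + 2) * t"
      using \<open>0 \<le> t\<close> by (simp add: mult_right_mono)
    with that \<open>0 \<le> t\<close> show ?thesis
      by (simp add: S_def R_def) linarith
  qed
  have "2 powr t \<le> 2 powr real R"
    unfolding R_def using \<open>0 \<le> t\<close> by simp linarith
  also have "\<dots> = real (card S)"
    using \<open>card S = 2 ^ R\<close> by (simp add: powr_realpow)
  finally have "ennreal (2 powr t) \<le> ennreal (card S)"
    by (rule ennreal_leI)
  also have "\<dots> \<le> ennreal (real n + 2) * D ((real n + 2) * t + 4)"
    by (rule card_le_control_fn) fact+
  finally show "ennreal (2 powr t) \<le> ennreal (real n + 2) * D ((real n + 2) * t + 4) + ennreal 4"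
    by (simp add: add_increasing2)
qed simp_all

section \<open>Upper bound\<close>

lemma ldist_le_cursor_lamps:
  assumes "(A, g) \<in> lamp_carrier" "(B, g') \<in> lamp_carrier" "ldist (A, g) (B, g') \<le> real m"
  shows "length g' \<le> length g + m" "length g \<le> length g' + m"
    and "take (length g - m) g' = take (length g - m) g"
    and "sym_diff A B \<subseteq> fmult g ` {e. length e \<le> m}"
proof -
  have AB: "finite A" "finite B" "A \<subseteq> F2" "B \<subseteq> F2" "g \<in> F2" "g' \<in> F2"
    using assms(1,2) by (auto simp: lamp_carrier_def)
  define T where "T = fmult (finv g)"
  define h where "h = T g'"
  have "lmult (linvw (A, g)) (B, g') = (T ` sym_diff A B, h)"
    unfolding T_def h_def using AB(3,4) by (rule lmult_linvw)
  moreover have "(T ` sym_diff A B, h) \<in> lamp_carrier"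
    using AB by (auto simp: lamp_carrier_def T_def h_def)
  ultimately have wl: "wordlen (T ` sym_diff A B, h) \<le> m"
    and bounds: "length h \<le> wordlen (T ` sym_diff A B, h)"
      "\<And>e. e \<in> T ` sym_diff A B \<Longrightarrow> length e \<le> wordlen (T ` sym_diff A B, h)"
    using assms(3) wordlen_bounds(2,3) by (auto simp: ldist_def)
  from wl bounds have h: "length h \<le> m" and lamps: "\<And>e. e \<in> T ` sym_diff A B \<Longrightarrow> length e \<le> m"
    by (meson order_trans)+
  note neighbour = F2_neighbour[OF AB(5,6), folded T_def, folded h_def]
  from neighbour(2,3) h show "length g' \<le> length g + m" "length g \<le> length g' + m"
    by linarith+
  have "take (length g - m) g' = take (length g - m) (take (length g - length h) g')"
    using h by (simp add: min_def)
  also have "\<dots> = take (length g - m) g"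
    using h by (simp add: neighbour(1) min_def)
  finally show "take (length g - m) g' = take (length g - m) g" .
  show "sym_diff A B \<subseteq> fmult g ` {e. length e \<le> m}"
  proof
    fix x
    assume "x \<in> sym_diff A B"
    moreover from this have "x = fmult g (T x)"
      using AB unfolding T_def by (auto simp: fmult_fmult_finv)
    ultimately show "x \<in> fmult g ` {e. length e \<le> m}"
      using lamps by blast
  qed
qed

text \<open>Translating by the inverse of the first cursor removes the common prefix \<open>c\<close>, leaving
  few lamps, all close to the identity, and a short cursor.\<close>
lemma ldist_common_prefix_le:
  assumes "finite A" "A \<subseteq> F2" "B \<subseteq> F2"
    and lamps: "sym_diff A B \<subseteq> (\<lambda>v. reduce (c @ v)) ` {v. length v \<le> K}"
    and "length u \<le> M" "length u' \<le> M"
  shows "ldist (A, c @ u) (B, reduce (c @ u')) \<le> real (4 ^ (K + 1) * (2 * (M + K) + 1) + 2 * M)"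
proof -
  define T where "T = fmult (finv (c @ u))"
  define F where "F = T ` sym_diff A B"
  have lm: "lmult (linvw (A, c @ u)) (B, reduce (c @ u')) = (F, T (reduce (c @ u')))"
    unfolding F_def T_def using assms(2,3) by (rule lmult_linvw)
  have "finite (sym_diff A B)"
    using assms(1) lamps finite_short_words by (blast intro: finite_subset)
  have "card F \<le> card (sym_diff A B)"
    unfolding F_def using \<open>finite (sym_diff A B)\<close> by (rule card_image_le)
  also have "\<dots> \<le> card ((\<lambda>v. reduce (c @ v)) ` {v. length v \<le> K})"
    using lamps finite_short_words by (intro card_mono) simp_all
  also have "\<dots> \<le> card {v :: letter list. length v \<le> K}"
    using finite_short_words by (rule card_image_le)
  also have "\<dots> \<le> 4 ^ (K + 1)"
    by (rule card_short_words)
  finally have card: "card F \<le> 4 ^ (K + 1)" .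
  have lamp_length: "length s \<le> M + K" if "s \<in> F" for s
  proof -
    from that lamps obtain v where "length v \<le> K" "s = T (reduce (c @ v))"
      unfolding F_def by blast
    then show ?thesis
      using length_fmult_finv_append[of c u v] assms(5) unfolding T_def by simp
  qed
  have cursor: "length (T (reduce (c @ u'))) \<le> 2 * M"
    using length_fmult_finv_append[of c u u'] assms(5,6) unfolding T_def by simp
  have "wordlen (F, T (reduce (c @ u'))) \<le> (\<Sum>s\<in>F. 2 * length s + 1) + length (T (reduce (c @ u')))"
    using \<open>finite (sym_diff A B)\<close> assms(2,3) by (intro wordlen_le_sum) (auto simp: F_def T_def)
  also have "\<dots> \<le> (\<Sum>s\<in>F. 2 * (M + K) + 1) + 2 * M"
    using lamp_length cursor by (intro add_mono sum_mono) fastforce+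
  also have "\<dots> = card F * (2 * (M + K) + 1) + 2 * M"
    by simp
  also have "\<dots> \<le> 4 ^ (K + 1) * (2 * (M + K) + 1) + 2 * M"
    using card by (intro add_mono mult_right_mono) simp_all
  finally show ?thesis
    unfolding ldist_def lm by (simp only: of_nat_le_iff)
qed

lemma div_mod_of_bounds:
  fixes x N q w :: nat
  assumes "N * q \<le> x" "x < N * q + w" "w \<le> N"
  shows "x div N = q" "x mod N < w"
proof -
  show "x div N = q"
    by (rule div_nat_eqI) (use assms in auto)
  with assms show "x mod N < w"
    using minus_div_mult_eq_mod[of x N] by (simp add: mult.commute)
qed

lemma exists_shift_mod:
  fixes t m :: nat
  assumes "0 < m"
  shows "\<exists>j\<le>1. m \<le> (t + 3 * j * m) mod (6 * m) \<and> (t + 3 * j * m) mod (6 * m) < 4 * m"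
proof (cases "m \<le> t mod (6 * m) \<and> t mod (6 * m) < 4 * m")
  case True
  then show ?thesis
    by (intro exI[of _ 0]) simp
next
  case False
  define \<rho> where "\<rho> = t mod (6 * m)"
  have "\<rho> < 6 * m"
    using assms by (simp add: \<rho>_def)
  have "(t + 3 * m) mod (6 * m) = (\<rho> + 3 * m) mod (6 * m)"
    by (simp add: \<rho>_def mod_add_left_eq)
  also have "\<dots> = (if \<rho> + 3 * m < 6 * m then \<rho> + 3 * m else \<rho> - 3 * m)"
    using \<open>\<rho> < 6 * m\<close> by (auto simp: le_mod_geq not_less)
  finally show ?thesis
    using False \<open>\<rho> < 6 * m\<close> unfolding \<rho>_def[symmetric] by (intro exI[of _ 1]) auto
qed

text \<open>The cursor lengths are cut into bands of width \<open>5 m\<close> separated by gaps of width \<open>m\<close>;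
  the second family (\<open>j = 1\<close>) is shifted by half a period. \<open>band_level m j a\<close> is the cursor
  length at the bottom of the band of \<open>a\<close> (truncated at \<open>0\<close>).\<close>
definition band_height :: "nat \<Rightarrow> nat \<Rightarrow> lelem \<Rightarrow> nat" where
  "band_height m j a = length (snd a) + 3 * j * m"

definition band_cover :: "nat \<Rightarrow> nat \<Rightarrow> lelem set" where
  "band_cover m j = {a \<in> lamp_carrier. j \<le> 1 \<and> band_height m j a mod (6 * m) < 5 * m}"

definition band_level :: "nat \<Rightarrow> nat \<Rightarrow> lelem \<Rightarrow> nat" where
  "band_level m j a = 6 * m * (band_height m j a div (6 * m)) - 3 * j * m"

lemma band_cover_subset: "band_cover m j \<subseteq> lamp_carrier"
  by (auto simp: band_cover_def)

lemma ball_subset_band_cover: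
  assumes "0 < m" "x \<in> lamp_carrier"
  shows "\<exists>j\<le>1. {y \<in> lamp_carrier. ldist x y \<le> real m} \<subseteq> band_cover m j"
proof -
  obtain A g where x: "x = (A, g)"
    by fastforce
  obtain j where "j \<le> 1" and j: "m \<le> band_height m j x mod (6 * m)" "band_height m j x mod (6 * m) < 4 * m"
    using exists_shift_mod[OF assms(1)] unfolding band_height_def by blast
  define q where "q = band_height m j x div (6 * m)"
  have x_height: "band_height m j x = 6 * m * q + band_height m j x mod (6 * m)"
    by (simp add: q_def)
  have "y \<in> band_cover m j" if "y \<in> lamp_carrier" "ldist x y \<le> real m" for y
  proof -
    obtain B g' where y: "y = (B, g')"
      by fastforce
    have "length g' \<le> length g + m" "length g \<le> length g' + m"
      using ldist_le_cursor_lamps(1,2) assms(2) that unfolding x y by blast+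
    then have "6 * m * q \<le> band_height m j y" "band_height m j y < 6 * m * q + 5 * m"
      using x_height j by (simp_all add: band_height_def x y)
    then have "band_height m j y mod (6 * m) < 5 * m"
      by (rule div_mod_of_bounds(2)) simp
    with that(1) \<open>j \<le> 1\<close> show ?thesis
      by (simp add: band_cover_def)
  qed
  with \<open>j \<le> 1\<close> show ?thesis
    by blast
qed

text \<open>A step of length at most \<open>m\<close> cannot cross a gap of width \<open>m\<close>.\<close>
lemma band_level_eq_of_ldist_le:
  assumes "a \<in> band_cover m j" "b \<in> band_cover m j" "ldist a b \<le> real m"
  shows "band_level m j b = band_level m j a"
proof -
  have step: "v div (6 * m) = u div (6 * m)"
    if "u mod (6 * m) < 5 * m" "u \<le> v" "v \<le> u + m" for u v :: nat
  proof (rule div_mod_of_bounds(1))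
    have "u = 6 * m * (u div (6 * m)) + u mod (6 * m)"
      by simp
    with that show "6 * m * (u div (6 * m)) \<le> v" "v < 6 * m * (u div (6 * m)) + 6 * m"
      by linarith+
  qed simp
  obtain A g B g' where ab: "a = (A, g)" "b = (B, g')"
    by fastforce
  have "length g' \<le> length g + m" "length g \<le> length g' + m"
    using ldist_le_cursor_lamps(1,2) assms band_cover_subset unfolding ab by blast+
  then have "band_height m j b \<le> band_height m j a + m" "band_height m j a \<le> band_height m j b + m"
    by (simp_all add: band_height_def ab)
  moreover have "band_height m j a mod (6 * m) < 5 * m" "band_height m j b mod (6 * m) < 5 * m"
    using assms(1,2) by (simp_all add: band_cover_def)
  ultimately have "band_height m j b div (6 * m) = band_height m j a div (6 * m)"
    using step[of "band_height m j a" "band_height m j b"] step[of "band_height m j b" "band_height m j a"]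
    by linarith
  then show ?thesis
    by (simp add: band_level_def)
qed

lemma band_level_bounds:
  assumes "a \<in> band_cover m j"
  shows "band_level m j a \<le> length (snd a)" "length (snd a) < band_level m j a + 5 * m"
proof -
  define Q where "Q = band_height m j a div (6 * m)"
  define \<rho> where "\<rho> = band_height m j a mod (6 * m)"
  have "length (snd a) + 3 * j * m = 6 * m * Q + \<rho>"
    unfolding Q_def \<rho>_def band_height_def by simp
  moreover have "\<rho> < 5 * m"
    using assms by (simp add: band_cover_def \<rho>_def)
  ultimately show "band_level m j a \<le> length (snd a)" "length (snd a) < band_level m j a + 5 * m"
    unfolding band_level_def Q_def[symmetric] by arith+
qed

lemma fmult_in_prefix_image:
  assumes "length (drop k g) + length e \<le> K"
  shows "fmult g e \<in> (\<lambda>v. reduce (take k g @ v)) ` {v. length v \<le> K}"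
proof
  show "fmult g e = reduce (take k g @ reduce (drop k g @ e))"
    by (simp add: fmult_def flip: append_assoc)
  show "reduce (drop k g @ e) \<in> {v. length v \<le> K}"
    using assms length_reduce_le[of "drop k g @ e"] by simp
qed

text \<open>Cursors in the band are at least \<open>band_level\<close> long, so a step of length \<open>m\<close> keeps their
  first \<open>band_level - m\<close> letters; it toggles lamps within distance \<open>m\<close> of the cursor, whose part
  beyond this prefix is shorter than \<open>6 m\<close>.\<close>
lemma band_cover_step:
  assumes q: "q \<in> band_cover m j" and q': "q' \<in> band_cover m j" and close: "ldist q q' \<le> real m"
  defines "k \<equiv> band_level m j q - m"
  shows "band_level m j q' = band_level m j q \<and> take k (snd q') = take k (snd q)
    \<and> sym_diff (fst q) (fst q') \<subseteq> (\<lambda>v. reduce (take k (snd q) @ v)) ` {v. length v \<le> 7 * m}"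
proof -
  obtain A g B g' where qq': "q = (A, g)" "q' = (B, g')"
    by fastforce
  have "(A, g) \<in> lamp_carrier" "(B, g') \<in> lamp_carrier"
    using q q' band_cover_subset unfolding qq' by blast+
  note step = ldist_le_cursor_lamps[OF this close[unfolded qq']]
  have "k \<le> length g - m"
    using band_level_bounds(1)[OF q] qq'(1) by (simp add: k_def)
  then have "take k g' = take k (take (length g - m) g')"
    by (simp add: min_def)
  also have "\<dots> = take k (take (length g - m) g)"
    by (simp only: step(3))
  also have "\<dots> = take k g"
    using \<open>k \<le> length g - m\<close> by (simp add: min_def)
  finally have "take k g' = take k g" .
  moreover have "sym_diff A B \<subseteq> (\<lambda>v. reduce (take k g @ v)) ` {v. length v \<le> 7 * m}"
  proof
    fix x
    assume "x \<in> sym_diff A B"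
    then obtain e where e: "length e \<le> m" "x = fmult g e"
      using step(4) by blast
    have "length (drop k g) \<le> 6 * m"
      using band_level_bounds(2)[OF q] qq'(1) by (simp add: k_def)
    with e show "x \<in> (\<lambda>v. reduce (take k g @ v)) ` {v. length v \<le> 7 * m}"
      using fmult_in_prefix_image[of k g e "7 * m"] by simp
  qed
  moreover have "band_level m j q' = band_level m j q"
    using q q' close by (rule band_level_eq_of_ldist_le)
  ultimately show ?thesis
    using qq' by simp
qed

lemma band_component_invariant:
  assumes "rconn (band_cover m j) ldist r p q" "r \<le> real m"
  shows "band_level m j q = band_level m j p
    \<and> take (band_level m j p - m) (snd q) = take (band_level m j p - m) (snd p)
    \<and> sym_diff (fst p) (fst q)
        \<subseteq> (\<lambda>v. reduce (take (band_level m j p - m) (snd p) @ v)) ` {v. length v \<le> 7 * m}"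
  using assms(1)
proof (induction rule: rconn.induct)
  case (refl p)
  then show ?case
    by simp
next
  case (step p q q')
  have "q \<in> band_cover m j"
    using rconn_mem[OF step.hyps(1)] by blast
  moreover have "ldist q q' \<le> real m"
    using step.hyps(3) assms(2) by linarith
  ultimately have "band_level m j q' = band_level m j q \<and>
    take (band_level m j p - m) (snd q') = take (band_level m j p - m) (snd p) \<and>
    sym_diff (fst q) (fst q')
      \<subseteq> (\<lambda>v. reduce (take (band_level m j p - m) (snd p) @ v)) ` {v. length v \<le> 7 * m}"
    using band_cover_step[OF _ step.hyps(2)] step.IH by metis
  moreover have "sym_diff (fst p) (fst q') \<subseteq> sym_diff (fst p) (fst q) \<union> sym_diff (fst q) (fst q')"
    by blast
  ultimately show ?case
    using step.IH by auto
qed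

lemma band_component_ldist_le:
  assumes "rconn (band_cover m j) ldist r p q" "r \<le> real m"
  shows "ldist p q \<le> real (4 ^ (7 * m + 1) * (26 * m + 1) + 12 * m)"
proof -
  obtain A gp B gq where pq: "p = (A, gp)" "q = (B, gq)"
    by fastforce
  define k where "k = band_level m j (A, gp) - m"
  define c where "c = take k gp"
  have inv: "band_level m j (B, gq) = band_level m j (A, gp)" "take k gq = c"
    "sym_diff A B \<subseteq> (\<lambda>v. reduce (c @ v)) ` {v. length v \<le> 7 * m}"
    using band_component_invariant[OF assms(1)[unfolded pq] assms(2)] by (simp_all add: k_def c_def)
  have "(A, gp) \<in> band_cover m j" "(B, gq) \<in> band_cover m j"
    using rconn_mem[OF assms(1)] pq by simp_all
  then have car: "finite A" "A \<subseteq> F2" "B \<subseteq> F2" "gq \<in> F2"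
    and suffix: "length (drop k gp) \<le> 6 * m" "length (drop k gq) \<le> 6 * m"
    using band_cover_subset band_level_bounds(2) inv(1) unfolding k_def
    by (fastforce simp: lamp_carrier_def)+
  have "gp = c @ drop k gp"
    by (simp add: c_def)
  moreover have "gq = reduce (c @ drop k gq)"
    using inv(2) car(4) by (metis append_take_drop_id F2_def mem_Collect_eq reduce_reduced)
  ultimately have "ldist p q = ldist (A, c @ drop k gp) (B, reduce (c @ drop k gq))"
    unfolding pq by simp
  also have "\<dots> \<le> real (4 ^ (7 * m + 1) * (2 * (6 * m + 7 * m) + 1) + 2 * (6 * m))"
    using car(1-3) inv(3) suffix by (rule ldist_common_prefix_le)
  finally show ?thesis
    by simp
qed

lemma band_diameter_le_exp: "4 ^ (7 * m + 1) * (26 * m + 1) + 12 * m \<le> (2::nat) ^ (20 * m + 8)"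
proof -
  have "38 * m + 1 \<le> 64 * (2::nat) ^ m"
    using less_exp[of m] one_le_power[of 2 m] by linarith
  also have "\<dots> = 2 ^ (m + 6)"
    by (simp add: power_add)
  also have "\<dots> \<le> 2 ^ (6 * m + 6)"
    by (rule power_increasing) simp_all
  finally have "38 * m + 1 \<le> (2::nat) ^ (6 * m + 6)" .
  have "4 ^ (7 * m + 1) * (26 * m + 1) + 12 * m \<le> (2::nat) ^ (14 * m + 2) * (38 * m + 1)"
  proof -
    have "(4::nat) ^ (7 * m + 1) = (2 ^ 2) ^ (7 * m + 1)"
      by simp
    also have "\<dots> = 2 ^ (2 * (7 * m + 1))"
      by (rule power_mult[symmetric])
    finally have "(4::nat) ^ (7 * m + 1) = 2 ^ (14 * m + 2)"
      by simp
    moreover have "12 * m \<le> (2::nat) ^ (14 * m + 2) * (12 * m)"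
      by simp
    ultimately show ?thesis
      by (simp add: algebra_simps)
  qed
  also have "\<dots> \<le> 2 ^ (14 * m + 2) * 2 ^ (6 * m + 6)"
    using \<open>38 * m + 1 \<le> 2 ^ (6 * m + 6)\<close> by (rule mult_left_mono) simp
  also have "\<dots> = 2 ^ ((14 * m + 2) + (6 * m + 6))"
    by (rule power_add[symmetric])
  also have "(14 * m + 2) + (6 * m + 6) = 20 * m + 8"
    by simp
  finally show ?thesis .
qed

definition exp_control :: "real \<Rightarrow> ennreal" where
  "exp_control r = ennreal (2 ^ (20 * nat \<lceil>r\<rceil> + 8))"

lemma band_cover_ball:
  assumes "0 < r" "1 \<le> n" "x \<in> lamp_carrier"
  shows "\<exists>i\<le>n. {y\<in>lamp_carrier. ldist x y < r} \<subseteq> band_cover (nat \<lceil>r\<rceil>) i"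
proof -
  have "0 < nat \<lceil>r\<rceil>"
    using assms(1) by simp
  then obtain j where "j \<le> 1" and j: "{y \<in> lamp_carrier. ldist x y \<le> real (nat \<lceil>r\<rceil>)} \<subseteq> band_cover (nat \<lceil>r\<rceil>) j"
    using ball_subset_band_cover[OF _ assms(3)] by blast
  have "{y\<in>lamp_carrier. ldist x y < r} \<subseteq> {y \<in> lamp_carrier. ldist x y \<le> real (nat \<lceil>r\<rceil>)}"
    using real_nat_ceiling_ge[of r] by auto
  with j have "{y\<in>lamp_carrier. ldist x y < r} \<subseteq> band_cover (nat \<lceil>r\<rceil>) j"
    by (rule subset_trans[rotated])
  with \<open>j \<le> 1\<close> assms(2) show ?thesis
    by (intro exI[of _ j]) simp
qed

lemma band_component_ldist_le_exp_control:
  assumes "rconn (band_cover (nat \<lceil>r\<rceil>) i) ldist r p q"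
  shows "ennreal (ldist p q) \<le> exp_control r"
proof -
  let ?m = "nat \<lceil>r\<rceil>"
  have "ldist p q \<le> real (4 ^ (7 * ?m + 1) * (26 * ?m + 1) + 12 * ?m)"
    using assms real_nat_ceiling_ge by (rule band_component_ldist_le)
  also have "\<dots> \<le> 2 ^ (20 * ?m + 8)"
    using band_diameter_le_exp[of ?m] by (metis of_nat_le_iff of_nat_numeral of_nat_power)
  finally show ?thesis
    unfolding exp_control_def by (rule ennreal_leI)
qed

lemma control_fn_exp_control:
  assumes "1 \<le> n"
  shows "control_fn lamp_carrier ldist n exp_control"
  unfolding control_fn_def
proof (intro allI impI)
  fix r :: real
  assume "0 < r"
  let ?U = "band_cover (nat \<lceil>r\<rceil>)"
  show "\<exists>U. (\<forall>i\<le>n. U i \<subseteq> lamp_carrier) \<and> (\<Union>i\<le>n. U i) = lamp_carrier \<and>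
      (\<forall>x\<in>lamp_carrier. \<exists>i\<le>n. {y\<in>lamp_carrier. ldist x y < r} \<subseteq> U i) \<and>
      (\<forall>i\<le>n. \<forall>p q. rconn (U i) ldist r p q \<longrightarrow> ennreal (ldist p q) \<le> exp_control r)"
  proof (intro exI[of _ ?U] conjI ballI allI impI)
    show "?U i \<subseteq> lamp_carrier" for i
      by (rule band_cover_subset)
    show ball: "\<exists>i\<le>n. {y\<in>lamp_carrier. ldist x y < r} \<subseteq> ?U i" if "x \<in> lamp_carrier" for x
      using \<open>0 < r\<close> assms that by (rule band_cover_ball)
    show "ennreal (ldist p q) \<le> exp_control r" if "rconn (?U i) ldist r p q" for i p q
      using that by (rule band_component_ldist_le_exp_control)
    show "(\<Union>i\<le>n. ?U i) = lamp_carrier"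
    proof
      show "lamp_carrier \<subseteq> (\<Union>i\<le>n. ?U i)"
      proof
        fix x
        assume "x \<in> lamp_carrier"
        then obtain i where "i \<le> n" "{y\<in>lamp_carrier. ldist x y < r} \<subseteq> ?U i"
          using ball by blast
        moreover have "ldist x x < r"
          using \<open>0 < r\<close> by (cases x) (simp add: ldist_self)
        ultimately show "x \<in> (\<Union>i\<le>n. ?U i)"
          using \<open>x \<in> lamp_carrier\<close> by blast
      qed
    qed (use band_cover_subset in blast)
  qed
qed

lemma exp_dominates_exp_control: "weakly_dominates (\<lambda>t. ennreal (2 powr t)) exp_control"
  unfolding weakly_dominates_def
proof (rule exI[of _ "20::real"], intro conjI exI[of _ "28::real"] allI impI)
  fix t :: real
  assume "0 \<le> t"
  have "real (nat \<lceil>t\<rceil>) \<le> t + 1"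
    using \<open>0 \<le> t\<close> by linarith
  then have "(2::real) ^ (20 * nat \<lceil>t\<rceil> + 8) \<le> 2 powr (20 * t + 28)"
    by (subst powr_realpow[symmetric]) auto
  also have "\<dots> \<le> 20 * 2 powr (20 * t + 28) + 28"
    by simp
  finally have "exp_control t \<le> ennreal (20 * 2 powr (20 * t + 28) + 28)"
    unfolding exp_control_def by (rule ennreal_leI)
  then show "exp_control t \<le> ennreal 20 * ennreal (2 powr (20 * t + 28)) + ennreal 28"
    by (simp add: ennreal_plus ennreal_mult)
qed simp_all

theorem corollary4p7:
  fixes n :: nat
  assumes "n \<ge> 1"
  shows "(\<exists>D. control_fn lamp_carrier ldist n D \<and>
              weakly_dominates (\<lambda>t. ennreal (2 powr t)) D) \<and>
         (\<forall>D. control_fn lamp_carrier ldist n D \<longrightarrow>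
              weakly_dominates D (\<lambda>t. ennreal (2 powr t)))"
  using control_fn_exp_control[OF assms] exp_dominates_exp_control control_fn_dominates_exp by blast

end
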